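(* Let $Z\in\{0,1\}$ be a treatment variable and $X$ pre-treatment covariates with distribution $\mathcal{Q}$. Let $\mathcal{P}(Z=1\mid X)$ be the true conditional treatment-assignment model and $\mathcal{P}'(Z=1\mid X)$ an approximation of it produced by logistic regression. Let $\delta=\int_X\mathcal{Q}(X)\mathcal{P}(Z=1\mid X)\,dX$ and $\delta'=\int_X\mathcal{Q}(X)\mathcal{P}'(Z=1\mid X)\,dX$, and let $\mathcal{Q}\mathcal{P}$ (resp. $\mathcal{Q}\mathcal{P}'$) denote the distribution of $X$ given $Z=1$ when $X\sim\mathcal{Q}$ and $Z$ is assigned according to $\mathcal{P}$ (resp. $\mathcal{P}'$), i.e. with density $\mathcal{Q}(x)\mathcal{P}(Z=1\mid x)/\delta$ (resp. $\mathcal{Q}(x)\mathcal{P}'(Z=1\mid x)/\delta'$). Let $f$ be any function of $X$ with $0\le f(x)\le M$ for all $x$, for a fixed constant $M$. For $0\le\epsilon,\gamma\le1$, if $\mathbb{E}_{X\sim\mathcal{Q}}\left(|\mathcal{P}(Z=1\mid X)-\mathcal{P}'(Z=1\mid X)|\right)\le\epsilon$ and $\mathbb{E}_{X\sim\mathcal{Q}\mathcal{P}}(f(X))\le\gamma M$, then $$\mathbb{E}_{X\sim\mathcal{Q}\mathcal{P}'}(f(X))\le\left(\frac{\epsilon}{\delta}+\gamma\right)\left(\frac{\delta}{\delta-\epsilon}\right)M.$$ *)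

theory Defs
  imports "HOL-Probability.Probability"
begin

text \<open>Logistic (sigmoid) function; a logistic-regression propensity model is
  x \<mapsto> logistic (b0 + beta \<bullet> x).\<close>
definition logistic :: "real \<Rightarrow> real" where
  "logistic t = 1 / (1 + exp (- t))"

definition treat_share :: "'a measure \<Rightarrow> ('a \<Rightarrow> real) \<Rightarrow> real" where
  "treat_share Q p = (\<integral>x. p x \<partial>Q)"

text \<open>Distribution of X given Z=1, where X ~ Q and Z is assigned by p:
  density Q(x) p(x) / delta with respect to Q.\<close>
definition treated_dist :: "'a measure \<Rightarrow> ('a \<Rightarrow> real) \<Rightarrow> 'a measure" where
  "treated_dist Q p = density Q (\<lambda>x. ennreal (p x / treat_share Q p))"

end

theory Submission
  imports Defs
begin

text \<open>Conditioning on \<open>Z = 1\<close> reweights \<open>Q\<close> by the propensity, so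
  \<open>E_{QP'} f = (\<integral> p' f dQ) / \<delta>'\<close>. Replacing \<open>p\<close> by \<open>p'\<close> moves the numerator by at most
  \<open>M \<integral> |p - p'| dQ \<le> M \<epsilon>\<close> and the normaliser by at most \<open>\<epsilon>\<close>, so
  \<open>E_{QP'} f \<le> (\<delta> \<gamma> M + \<epsilon> M) / (\<delta> - \<epsilon>)\<close>. Logistic regression enters only through the
  fact that its model is a measurable function with values in \<open>[0, 1]\<close>.\<close>

lemma logistic_pos: "0 < logistic t"
  by (simp add: logistic_def add_pos_pos)

lemma logistic_le_one: "logistic t \<le> 1"
  using logistic_pos[of t] by (simp add: logistic_def divide_le_eq)

lemma borel_measurable_logistic_model:
  fixes beta :: "'a::euclidean_space"
  shows "(\<lambda>x. logistic (b0 + beta \<bullet> x)) \<in> borel_measurable borel"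
  unfolding logistic_def by measurable

lemma integral_treated_dist:
  fixes p f :: "'a \<Rightarrow> real"
  assumes "p \<in> borel_measurable Q" "\<And>x. 0 \<le> p x" "f \<in> borel_measurable Q"
    and "0 \<le> treat_share Q p"
  shows "(\<integral>x. f x \<partial>treated_dist Q p) = (\<integral>x. p x * f x \<partial>Q) / treat_share Q p"
proof -
  have "(\<integral>x. f x \<partial>treated_dist Q p) = (\<integral>x. p x * f x / treat_share Q p \<partial>Q)"
    unfolding treated_dist_def using assms by (subst integral_density) auto
  then show ?thesis
    by simp
qed

lemma treat_share_diff_le_integral_abs_diff:
  fixes p q :: "'a \<Rightarrow> real"
  assumes "integrable Q p" "integrable Q q"
  shows "treat_share Q p - treat_share Q q \<le> (\<integral>x. \<bar>p x - q x\<bar> \<partial>Q)"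
proof -
  have "treat_share Q p - treat_share Q q = (\<integral>x. p x - q x \<partial>Q)"
    unfolding treat_share_def using assms by simp
  also have "\<dots> \<le> (\<integral>x. \<bar>p x - q x\<bar> \<partial>Q)"
    using assms by (intro integral_mono) auto
  finally show ?thesis .
qed

lemma integral_mult_bounded_change_le:
  fixes p q f :: "'a \<Rightarrow> real"
  assumes "finite_measure Q"
    and p: "p \<in> borel_measurable Q" "\<And>x. 0 \<le> p x \<and> p x \<le> 1"
    and q: "q \<in> borel_measurable Q" "\<And>x. 0 \<le> q x \<and> q x \<le> 1"
    and f: "f \<in> borel_measurable Q" "\<And>x. 0 \<le> f x \<and> f x \<le> M"
  shows "(\<integral>x. q x * f x \<partial>Q) \<le> (\<integral>x. p x * f x \<partial>Q) + M * (\<integral>x. \<bar>p x - q x\<bar> \<partial>Q)"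
proof -
  interpret finite_measure Q by fact
  have bounded: "\<bar>w x * f x\<bar> \<le> M" if "0 \<le> w x \<and> w x \<le> 1" for w :: "'a \<Rightarrow> real" and x
    using that f(2)[of x] mult_mono[of "w x" 1 "f x" M] by auto
  have int_pf: "integrable Q (\<lambda>x. p x * f x)" and int_qf: "integrable Q (\<lambda>x. q x * f x)"
    using p q f(1) bounded[of p] bounded[of q] by (auto intro!: integrable_const_bound[where B = M])
  have "\<bar>p x - q x\<bar> \<le> 1" for x
    using p(2)[of x] q(2)[of x] by auto
  then have int_diff: "integrable Q (\<lambda>x. \<bar>p x - q x\<bar>)"
    using p(1) q(1) by (intro integrable_const_bound[where B = 1]) auto
  have pointwise: "q x * f x \<le> p x * f x + M * \<bar>p x - q x\<bar>" for x
  proof -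
    have "q x * f x - p x * f x \<le> \<bar>p x - q x\<bar> * f x"
      using f(2)[of x] by (simp add: left_diff_distrib[symmetric] mult_right_mono)
    also have "\<dots> \<le> M * \<bar>p x - q x\<bar>"
      using f(2)[of x] by (simp add: mult.commute mult_right_mono)
    finally show ?thesis by simp
  qed
  have "(\<integral>x. q x * f x \<partial>Q) \<le> (\<integral>x. p x * f x + M * \<bar>p x - q x\<bar> \<partial>Q)"
    using int_pf int_qf int_diff pointwise by (intro integral_mono) auto
  also have "\<dots> = (\<integral>x. p x * f x \<partial>Q) + M * (\<integral>x. \<bar>p x - q x\<bar> \<partial>Q)"
    using int_pf int_diff by simp
  finally show ?thesis .
qed

lemma integral_treated_dist_perturbed_le:
  fixes p q f :: "'a \<Rightarrow> real"
  assumes fin: "finite_measure Q"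
    and p: "p \<in> borel_measurable Q" "\<And>x. 0 \<le> p x \<and> p x \<le> 1"
    and q: "q \<in> borel_measurable Q" "\<And>x. 0 \<le> q x \<and> q x \<le> 1"
    and f: "f \<in> borel_measurable Q" "\<And>x. 0 \<le> f x \<and> f x \<le> M"
    and eps_less: "\<epsilon> < treat_share Q p"
    and dist_le: "(\<integral>x. \<bar>p x - q x\<bar> \<partial>Q) \<le> \<epsilon>"
    and expectation_le: "(\<integral>x. f x \<partial>treated_dist Q p) \<le> \<gamma> * M"
  shows "(\<integral>x. f x \<partial>treated_dist Q q)
           \<le> (\<epsilon> / treat_share Q p + \<gamma>) * (treat_share Q p / (treat_share Q p - \<epsilon>)) * M"
proof -
  interpret finite_measure Q by fact
  define \<delta> where "\<delta> = treat_share Q p"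
  define \<delta>' where "\<delta>' = treat_share Q q"
  have "0 \<le> (\<integral>x. \<bar>p x - q x\<bar> \<partial>Q)"
    by simp
  then have "0 < \<delta>"
    using dist_le eps_less unfolding \<delta>_def by linarith
  have "0 \<le> M"
    using f(2)[of undefined] by simp
  have "integrable Q p" "integrable Q q"
    using p q by (auto intro!: integrable_const_bound[where B = 1])
  then have "0 < \<delta> - \<epsilon>" "\<delta> - \<epsilon> \<le> \<delta>'"
    using treat_share_diff_le_integral_abs_diff[of Q p q] dist_le eps_less
    by (auto simp: \<delta>_def \<delta>'_def)
  have "(\<integral>x. p x * f x \<partial>Q) \<le> \<delta> * \<gamma> * M"
    using expectation_le integral_treated_dist[OF p(1) _ f(1)] p(2) \<open>0 < \<delta>\<close>
    by (simp add: \<delta>_def divide_le_eq mult.commute mult.left_commute)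
  then have "(\<integral>x. p x * f x \<partial>Q) + M * (\<integral>x. \<bar>p x - q x\<bar> \<partial>Q) \<le> \<delta> * \<gamma> * M + M * \<epsilon>"
    using dist_le \<open>0 \<le> M\<close> by (intro add_mono mult_left_mono)
  then have numerator: "(\<integral>x. q x * f x \<partial>Q) \<le> \<delta> * \<gamma> * M + M * \<epsilon>"
    using integral_mult_bounded_change_le[OF fin p q f] by linarith
  moreover have "0 \<le> (\<integral>x. q x * f x \<partial>Q)"
    using q(2) f(2) by simp
  ultimately have "0 \<le> \<delta> * \<gamma> * M + M * \<epsilon>"
    by linarith
  have "(\<integral>x. f x \<partial>treated_dist Q q) = (\<integral>x. q x * f x \<partial>Q) / \<delta>'"
    using integral_treated_dist[OF q(1) _ f(1)] q(2) \<open>0 < \<delta> - \<epsilon>\<close> \<open>\<delta> - \<epsilon> \<le> \<delta>'\<close>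
    by (simp add: \<delta>'_def)
  also have "\<dots> \<le> (\<delta> * \<gamma> * M + M * \<epsilon>) / \<delta>'"
    using numerator \<open>0 < \<delta> - \<epsilon>\<close> \<open>\<delta> - \<epsilon> \<le> \<delta>'\<close> by (simp add: divide_right_mono)
  also have "\<dots> \<le> (\<delta> * \<gamma> * M + M * \<epsilon>) / (\<delta> - \<epsilon>)"
    using \<open>0 \<le> \<delta> * \<gamma> * M + M * \<epsilon>\<close> \<open>0 < \<delta> - \<epsilon>\<close> \<open>\<delta> - \<epsilon> \<le> \<delta>'\<close>
    by (intro divide_left_mono) auto
  also have "\<dots> = (\<epsilon> / \<delta> + \<gamma>) * (\<delta> / (\<delta> - \<epsilon>)) * M"
    using \<open>0 < \<delta>\<close> \<open>0 < \<delta> - \<epsilon>\<close> by (simp add: field_simps)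
  finally show ?thesis
    by (simp add: \<delta>_def)
qed

theorem lemma20:
  fixes Q :: "'a::euclidean_space measure"
    and p p' f :: "'a \<Rightarrow> real"
    and beta :: 'a and b0 :: real
    and M \<epsilon> \<gamma> :: real
  assumes "prob_space Q"
    and "sets Q = sets borel"
    and "p \<in> borel_measurable Q"
    and "\<And>x. 0 \<le> p x \<and> p x \<le> 1"
    and "\<And>x. p' x = logistic (b0 + beta \<bullet> x)"
    and "f \<in> borel_measurable Q"
    and "\<And>x. 0 \<le> f x \<and> f x \<le> M"
    and "0 \<le> \<epsilon>" and "\<epsilon> \<le> 1" and "0 \<le> \<gamma>" and "\<gamma> \<le> 1"
    and "\<epsilon> < treat_share Q p"
    and "(\<integral>x. \<bar>p x - p' x\<bar> \<partial>Q) \<le> \<epsilon>"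
    and "(\<integral>x. f x \<partial>treated_dist Q p) \<le> \<gamma> * M"
  shows "(\<integral>x. f x \<partial>treated_dist Q p')
           \<le> (\<epsilon> / treat_share Q p + \<gamma>) * (treat_share Q p / (treat_share Q p - \<epsilon>)) * M"
proof (rule integral_treated_dist_perturbed_le)
  show "finite_measure Q"
    using \<open>prob_space Q\<close> by (rule prob_space.finite_measure)
  have "p' = (\<lambda>x. logistic (b0 + beta \<bullet> x))"
    using assms(5) by blast
  then show "p' \<in> borel_measurable Q"
    using borel_measurable_logistic_model measurable_cong_sets[OF assms(2) refl] by blast
  show "0 \<le> p' x \<and> p' x \<le> 1" for x
    using assms(5) logistic_pos logistic_le_one less_imp_le by metis
qed (use assms in auto)

end
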